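(* Let $J\subseteq S$. If $\Pi_\downarrow^J(u)=\Pi_\downarrow^J(v)$ for some $u,v\in\mathfrak{S}_n^J$, then $\Pi_\uparrow^J(u)=\Pi_\uparrow^J(v)$.
   Context: $\mathfrak{S}_n$ is the symmetric group on $[n]$, $s_i=(i,i+1)$, $S=\{s_1,\dots,s_{n-1}\}$, one-line notation $w=w_1\cdots w_n$, $\mathrm{inv}(w)=\{(i,j):i<j,\ w_i>w_j\}$, weak order $u\le_S v\iff\mathrm{inv}(u)\subseteq\mathrm{inv}(v)$. For $J\subseteq S$, $\mathfrak{S}_n^J$ is the set of $w$ with $w_i<w_{i+1}$ whenever $s_i\in J$. Writing $J=S\setminus\{s_{j_1},\dots,s_{j_r}\}$ with $j_1<\dots<j_r$, the $J$-regions are $\{1,\dots,j_1\},\{j_1+1,\dots,j_2\},\dots,\{j_r+1,\dots,n\}$. $w\in\mathfrak{S}_n^J$ is $(J,231)$-avoiding if there are no indices $i<j<k$ in pairwise different $J$-regions with $w_k<w_i<w_j$ and $w_i=w_k+1$, and $(J,132)$-avoiding if there are no indices $i<j<k$ in pairwise different $J$-regions with $w_i<w_k<w_j$ and $w_k=w_i+1$. For $w\in\mathfrak{S}_n^J$, $\Pi_\downarrow^J(w)$ is the unique greatest $(J,231)$-avoiding element of $\mathfrak{S}_n^J$ that is $\le_S w$, and $\Pi_\uparrow^J(w)$ is the unique least $(J,132)$-avoiding element of $\mathfrak{S}_n^J$ that is $\ge_S w$ (both exist). *)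

theory Defs
  imports "HOL-Combinatorics.Permutations"
begin

(* Permutations of [n] = {1..n} as functions w :: nat => nat with w permutes {1..n};
   w i is the i-th entry of the one-line notation.
   A subset J of S = {s_1,...,s_{n-1}} is represented by the set of indices
   {i. s_i \<in> J}, a subset of {1..<n}. *)

definition inv_set :: "nat \<Rightarrow> (nat \<Rightarrow> nat) \<Rightarrow> (nat \<times> nat) set" where
  "inv_set n w = {(i, j). 1 \<le> i \<and> i < j \<and> j \<le> n \<and> w i > w j}"

definition weak_le :: "nat \<Rightarrow> (nat \<Rightarrow> nat) \<Rightarrow> (nat \<Rightarrow> nat) \<Rightarrow> bool" where
  "weak_le n u v \<longleftrightarrow> inv_set n u \<subseteq> inv_set n v"

definition parabolic :: "nat \<Rightarrow> nat set \<Rightarrow> (nat \<Rightarrow> nat) set" where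
  "parabolic n J = {w. w permutes {1..n} \<and> (\<forall>i\<in>J. w i < w (i + 1))}"

(* for i \<le> k: positions i and k lie in the same J-region iff no s_m with i \<le> m < k is missing from J *)
definition same_region :: "nat set \<Rightarrow> nat \<Rightarrow> nat \<Rightarrow> bool" where
  "same_region J i k \<longleftrightarrow> (\<forall>m. i \<le> m \<and> m < k \<longrightarrow> m \<in> J)"

definition avoids231 :: "nat \<Rightarrow> nat set \<Rightarrow> (nat \<Rightarrow> nat) \<Rightarrow> bool" where
  "avoids231 n J w \<longleftrightarrow> \<not> (\<exists>i j k. 1 \<le> i \<and> i < j \<and> j < k \<and> k \<le> n \<and>
      \<not> same_region J i j \<and> \<not> same_region J j k \<and> \<not> same_region J i k \<and>
      w k < w i \<and> w i < w j \<and> w i = w k + 1)"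

definition avoids132 :: "nat \<Rightarrow> nat set \<Rightarrow> (nat \<Rightarrow> nat) \<Rightarrow> bool" where
  "avoids132 n J w \<longleftrightarrow> \<not> (\<exists>i j k. 1 \<le> i \<and> i < j \<and> j < k \<and> k \<le> n \<and>
      \<not> same_region J i j \<and> \<not> same_region J j k \<and> \<not> same_region J i k \<and>
      w i < w k \<and> w k < w j \<and> w k = w i + 1)"

definition Pi_down :: "nat \<Rightarrow> nat set \<Rightarrow> (nat \<Rightarrow> nat) \<Rightarrow> (nat \<Rightarrow> nat)" where
  "Pi_down n J w = (THE x. x \<in> parabolic n J \<and> avoids231 n J x \<and> weak_le n x w \<and>
      (\<forall>y. y \<in> parabolic n J \<and> avoids231 n J y \<and> weak_le n y w \<longrightarrow> weak_le n y x))"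

definition Pi_up :: "nat \<Rightarrow> nat set \<Rightarrow> (nat \<Rightarrow> nat) \<Rightarrow> (nat \<Rightarrow> nat)" where
  "Pi_up n J w = (THE x. x \<in> parabolic n J \<and> avoids132 n J x \<and> weak_le n w x \<and>
      (\<forall>y. y \<in> parabolic n J \<and> avoids132 n J y \<and> weak_le n w y \<longrightarrow> weak_le n x y))"

end

theory Submission
  imports Defs
begin

text \<open>
  Let (i, j, k) be a (J,231)-pattern of w, so w i = w k + 1, and let u = w \<circ> (i k) be obtained by
  swapping these two values. Then u is still in S_n^J and inv(w) = inv(u) \<union> {(i, k)}.
  A (J,231)-avoiding y \<le> w must keep y i < y k, since otherwise a (J,231)-pattern of y can be
  found between positions i and k; hence y \<le> u, and w and u have the same image under
  \<Pi>\<down>. Dually, (i, j, k) is a (J,132)-pattern of u, so every (J,132)-avoiding z \<ge> u has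
  z k < z i, i.e. z \<ge> w; hence u and w have the same image under \<Pi>\<up>. Resolving
  (J,231)-patterns one at a time descends from w to \<Pi>\<down>(w), which shows
  \<Pi>\<up>(\<Pi>\<down>(w)) = \<Pi>\<up>(w).
\<close>

definition in_distinct_regions :: "nat \<Rightarrow> nat set \<Rightarrow> nat \<Rightarrow> nat \<Rightarrow> nat \<Rightarrow> bool" where
  "in_distinct_regions n J i j k \<longleftrightarrow> 1 \<le> i \<and> i < j \<and> j < k \<and> k \<le> n \<and>
     \<not> same_region J i j \<and> \<not> same_region J j k \<and> \<not> same_region J i k"

lemma avoids231_iff:
  "avoids231 n J w \<longleftrightarrow>
     \<not> (\<exists>i j k. in_distinct_regions n J i j k \<and> w k < w i \<and> w i < w j \<and> w i = w k + 1)"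
  unfolding avoids231_def in_distinct_regions_def by blast

lemma avoids132_iff:
  "avoids132 n J w \<longleftrightarrow>
     \<not> (\<exists>i j k. in_distinct_regions n J i j k \<and> w i < w k \<and> w k < w j \<and> w k = w i + 1)"
  unfolding avoids132_def in_distinct_regions_def by blast

lemma in_distinct_regionsD:
  assumes "in_distinct_regions n J i j k"
  shows "1 \<le> i" "i < j" "j < k" "k \<le> n" "\<not> same_region J i k"
  using assms unfolding in_distinct_regions_def by auto

lemma in_distinct_regions_widen:
  assumes "in_distinct_regions n J i j k" "1 \<le> i'" "i' \<le> i" "k \<le> k'" "k' \<le> n"
  shows "in_distinct_regions n J i' j k'"
  using assms unfolding in_distinct_regions_def same_region_def
  by (auto 4 3 intro: le_trans less_le_trans)

lemma permutes_preimage: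
  assumes "w permutes S" "v \<in> S"
  obtains q where "q \<in> S" "w q = v"
  using assms by (metis imageE permutes_image)

lemma not_avoids231I:
  assumes x: "x permutes {1..n}" and ijk: "in_distinct_regions n J i j k"
    and "x k < x i" "x i < x j"
    and gap: "\<And>p. i < p \<Longrightarrow> p < k \<Longrightarrow> \<not> (x k < x p \<and> x p < x i)"
  shows "\<not> avoids231 n J x"
proof -
  \<comment> \<open>The largest value in [x k, x i) occurring at or right of k sits at some p; the gap
     condition forces its successor to sit at some q \<le> i, and (q, j, p) is a (J,231)-pattern.\<close>
  define S where "S = {v. x k \<le> v \<and> v < x i \<and> (\<exists>p. k \<le> p \<and> p \<le> n \<and> x p = v)}"
  have "finite S" unfolding S_def by (rule finite_subset[of _ "{..<x i}"]) auto
  moreover have "x k \<in> S" using in_distinct_regionsD[OF ijk] \<open>x k < x i\<close> unfolding S_def by auto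
  ultimately have "Max S \<in> S" and Max_ge: "\<And>v. v \<in> S \<Longrightarrow> v \<le> Max S"
    using Max_in by auto
  then obtain p where p: "k \<le> p" "p \<le> n" "x p = Max S" "x k \<le> x p" "x p < x i"
    unfolding S_def by auto
  have "x i \<in> {1..n}" using in_distinct_regionsD[OF ijk] permutes_in_image[OF x] by auto
  then obtain q where q: "q \<in> {1..n}" "x q = x p + 1"
    using permutes_preimage[OF x, of "x p + 1"] p(5) by auto
  have inj: "x a = x b \<Longrightarrow> a = b" for a b using permutes_inj[OF x] by (simp add: inj_eq)
  have "q \<le> i"
  proof (cases "x q = x i")
    case True then show ?thesis using inj[OF True] by simp
  next
    case False
    then have "x q < x i" using q p by simp
    moreover have "\<not> k \<le> q"
    proof
      assume "k \<le> q"
      then have "x q \<in> S" unfolding S_def using q p \<open>x q < x i\<close> by auto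
      then show False using Max_ge q p by fastforce
    qed
    ultimately show ?thesis using gap[of q] q p by fastforce
  qed
  moreover have "q \<ge> 1" using q by simp
  ultimately have "in_distinct_regions n J q j p" using in_distinct_regions_widen[OF ijk] p by simp
  moreover have "x q < x j" using q p \<open>x i < x j\<close> by simp
  ultimately show ?thesis unfolding avoids231_iff using q by force
qed

lemma not_avoids132I:
  assumes x: "x permutes {1..n}" and ijk: "in_distinct_regions n J i j k"
    and "x i < x k" "x k < x j"
    and gap: "\<And>p. i < p \<Longrightarrow> p < k \<Longrightarrow> \<not> (x i < x p \<and> x p < x k)"
  shows "\<not> avoids132 n J x"
proof -
  define S where "S = {v. x i \<le> v \<and> v < x k \<and> (\<exists>p. 1 \<le> p \<and> p \<le> i \<and> x p = v)}"
  have "finite S" unfolding S_def by (rule finite_subset[of _ "{..<x k}"]) auto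
  moreover have "x i \<in> S" using in_distinct_regionsD[OF ijk] \<open>x i < x k\<close> unfolding S_def by auto
  ultimately have "Max S \<in> S" and Max_ge: "\<And>v. v \<in> S \<Longrightarrow> v \<le> Max S"
    using Max_in by auto
  then obtain p where p: "1 \<le> p" "p \<le> i" "x p = Max S" "x i \<le> x p" "x p < x k"
    unfolding S_def by auto
  have "x k \<in> {1..n}" using in_distinct_regionsD[OF ijk] permutes_in_image[OF x] by auto
  then obtain q where q: "q \<in> {1..n}" "x q = x p + 1"
    using permutes_preimage[OF x, of "x p + 1"] p(5) by auto
  have inj: "x a = x b \<Longrightarrow> a = b" for a b using permutes_inj[OF x] by (simp add: inj_eq)
  have "k \<le> q"
  proof (cases "x q = x k")
    case True then show ?thesis using inj[OF True] by simp
  next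
    case False
    then have "x q < x k" using q p by simp
    moreover have "\<not> q \<le> i"
    proof
      assume "q \<le> i"
      then have "x q \<in> S" unfolding S_def using q p \<open>x q < x k\<close> by auto
      then show False using Max_ge q p by fastforce
    qed
    ultimately show ?thesis using gap[of q] q p by fastforce
  qed
  then have "in_distinct_regions n J p j q" using in_distinct_regions_widen[OF ijk] p q by simp
  moreover have "x q < x j" using q p \<open>x k < x j\<close> by simp
  ultimately show ?thesis unfolding avoids132_iff using q by force
qed

lemma inv_set_finite: "finite (inv_set n w)"
  by (rule finite_subset[of _ "{1..n} \<times> {1..n}"]) (auto simp: inv_set_def)

lemma permutes_le_iff_inv_set:
  assumes w: "w permutes {1..n}" and "p \<in> {1..n}" "q \<in> {1..n}"
  shows "w q \<le> w p \<longleftrightarrow> (if q \<le> p then (q, p) \<notin> inv_set n w else (p, q) \<in> inv_set n w)"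
proof -
  have "w q = w p \<longleftrightarrow> q = p" using permutes_inj[OF w] by (simp add: inj_eq)
  then show ?thesis using assms unfolding inv_set_def by auto
qed

lemma card_le_value_permutes:
  assumes w: "w permutes {1..n}" and p: "p \<in> {1..n}"
  shows "card {q \<in> {1..n}. w q \<le> w p} = w p"
proof -
  have "w ` {q \<in> {1..n}. w q \<le> w p} = {v \<in> w ` {1..n}. v \<le> w p}" by auto
  also have "\<dots> = {1..w p}"
    using permutes_image[OF w] permutes_in_image[OF w, of p] p by auto
  finally have "card {1..w p} = card {q \<in> {1..n}. w q \<le> w p}"
    using inj_on_subset[OF permutes_inj[OF w] subset_UNIV] by (metis card_image)
  then show ?thesis by simp
qed

lemma weak_le_antisym:
  assumes u: "u permutes {1..n}" and v: "v permutes {1..n}"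
    and "weak_le n u v" "weak_le n v u"
  shows "u = v"
proof
  fix p
  have inv: "inv_set n u = inv_set n v" using assms(3,4) by (simp add: weak_le_def)
  show "u p = v p"
  proof (cases "p \<in> {1..n}")
    case True
    have "{q \<in> {1..n}. u q \<le> u p} = {q \<in> {1..n}. v q \<le> v p}"
      using permutes_le_iff_inv_set[OF u True] permutes_le_iff_inv_set[OF v True] inv by auto
    then show ?thesis using card_le_value_permutes[OF u True] card_le_value_permutes[OF v True] by simp
  qed (simp add: permutes_not_in[OF u] permutes_not_in[OF v])
qed

lemma inv_set_swap_ascent:
  assumes u: "u permutes {1..n}" and "1 \<le> i" "i < k" "k \<le> n" and "u k = u i + 1"
  shows "inv_set n (u \<circ> Transposition.transpose i k) = insert (i, k) (inv_set n u)"
proof -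
  have ne: "u r \<noteq> u i \<and> u r \<noteq> u k" if "r \<noteq> i" "r \<noteq> k" for r
    using permutes_inj[OF u] that by (simp add: inj_eq)
  show ?thesis
  proof (rule set_eqI)
    fix pq :: "nat \<times> nat"
    obtain p q where "pq = (p, q)" by fastforce
    then show "pq \<in> inv_set n (u \<circ> Transposition.transpose i k) \<longleftrightarrow> pq \<in> insert (i, k) (inv_set n u)"
      unfolding inv_set_def using assms ne[of p] ne[of q] by (auto simp: transpose_def split: if_splits)
  qed
qed

lemma parabolic_swap:
  assumes u: "u \<in> parabolic n J" and "1 \<le> i" "i < k" "k \<le> n"
    and "\<not> same_region J i k" and adj: "u k = u i + 1 \<or> u i = u k + 1"
  shows "u \<circ> Transposition.transpose i k \<in> parabolic n J"
proof -
  have up: "u permutes {1..n}" using u by (simp add: parabolic_def)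
  have ne: "u r \<noteq> u i \<and> u r \<noteq> u k" if "r \<noteq> i" "r \<noteq> k" for r
    using permutes_inj[OF up] that by (simp add: inj_eq)
  have "\<not> (i \<in> J \<and> k = i + 1)"
    using \<open>\<not> same_region J i k\<close> unfolding same_region_def by (fastforce simp: less_Suc_eq_le)
  then have "(u \<circ> Transposition.transpose i k) t < (u \<circ> Transposition.transpose i k) (t + 1)"
    if "t \<in> J" for t
    using that u adj \<open>i < k\<close> ne[of t] ne[of "t + 1"] unfolding parabolic_def
    by (auto simp: transpose_def split: if_splits)
  moreover have "u \<circ> Transposition.transpose i k permutes {1..n}"
    using assms by (intro permutes_compose[OF _ up] permutes_swap_id) auto
  ultimately show ?thesis by (simp add: parabolic_def)
qed

lemma inv_set_swap_descent:
  assumes w: "w permutes {1..n}" and "1 \<le> i" "i < k" "k \<le> n" and "w i = w k + 1"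
  shows "inv_set n w = insert (i, k) (inv_set n (w \<circ> Transposition.transpose i k))"
proof -
  have "w \<circ> Transposition.transpose i k permutes {1..n}"
    using assms by (intro permutes_compose[OF _ w] permutes_swap_id) auto
  then have "inv_set n (w \<circ> Transposition.transpose i k \<circ> Transposition.transpose i k) =
      insert (i, k) (inv_set n (w \<circ> Transposition.transpose i k))"
    using assms by (intro inv_set_swap_ascent) auto
  then show ?thesis by (simp add: comp_assoc)
qed

definition is_Pi_down :: "nat \<Rightarrow> nat set \<Rightarrow> (nat \<Rightarrow> nat) \<Rightarrow> (nat \<Rightarrow> nat) \<Rightarrow> bool" where
  "is_Pi_down n J w x \<longleftrightarrow> x \<in> parabolic n J \<and> avoids231 n J x \<and> weak_le n x w \<and>
      (\<forall>y. y \<in> parabolic n J \<and> avoids231 n J y \<and> weak_le n y w \<longrightarrow> weak_le n y x)"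

definition is_Pi_up :: "nat \<Rightarrow> nat set \<Rightarrow> (nat \<Rightarrow> nat) \<Rightarrow> (nat \<Rightarrow> nat) \<Rightarrow> bool" where
  "is_Pi_up n J w x \<longleftrightarrow> x \<in> parabolic n J \<and> avoids132 n J x \<and> weak_le n w x \<and>
      (\<forall>y. y \<in> parabolic n J \<and> avoids132 n J y \<and> weak_le n w y \<longrightarrow> weak_le n x y)"

lemma is_Pi_down_unique:
  assumes "is_Pi_down n J w x" "is_Pi_down n J w x'"
  shows "x = x'"
proof (rule weak_le_antisym)
  show "x permutes {1..n}" "x' permutes {1..n}" using assms by (auto simp: is_Pi_down_def parabolic_def)
  show "weak_le n x x'" "weak_le n x' x" using assms unfolding is_Pi_down_def by blast+
qed

lemma avoids231_below_le_swap:
  assumes y: "y permutes {1..n}" "avoids231 n J y" "weak_le n y w"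
    and w: "w permutes {1..n}" and ijk: "in_distinct_regions n J i j k"
    and "w i < w j" "w i = w k + 1"
  shows "weak_le n y (w \<circ> Transposition.transpose i k)"
proof -
  note ijk' = in_distinct_regionsD[OF ijk]
  have inv: "inv_set n y \<subseteq> inv_set n w" using y(3) by (simp add: weak_le_def)
  have inj: "y a = y b \<longleftrightarrow> a = b" for a b using permutes_inj[OF y(1)] by (simp add: inj_eq)
  have "y i < y k"
  proof (rule ccontr)
    assume "\<not> y i < y k"
    then have "y k < y i" using inj[of i k] ijk' by auto
    moreover have "(i, j) \<notin> inv_set n w" using \<open>w i < w j\<close> unfolding inv_set_def by auto
    then have "y i < y j" using inv inj[of i j] ijk' unfolding inv_set_def by auto
    moreover have "\<not> (y k < y p \<and> y p < y i)" if "i < p" "p < k" for p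
    proof
      assume "y k < y p \<and> y p < y i"
      then have "(i, p) \<in> inv_set n y" "(p, k) \<in> inv_set n y"
        using that ijk' unfolding inv_set_def by auto
      then have "(i, p) \<in> inv_set n w" "(p, k) \<in> inv_set n w" using inv by auto
      then show False using \<open>w i = w k + 1\<close> unfolding inv_set_def by auto
    qed
    ultimately show False using not_avoids231I[OF y(1) ijk] y(2) by blast
  qed
  then have "(i, k) \<notin> inv_set n y" unfolding inv_set_def by auto
  then show ?thesis
    using inv inv_set_swap_descent[OF w ijk'(1) _ ijk'(4)] ijk' \<open>w i = w k + 1\<close>
    by (auto simp: weak_le_def)
qed

lemma avoids132_above_ge_swap:
  assumes z: "z permutes {1..n}" "avoids132 n J z" "weak_le n u z"
    and u: "u permutes {1..n}" and ijk: "in_distinct_regions n J i j k"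
    and "u k < u j" "u k = u i + 1"
  shows "weak_le n (u \<circ> Transposition.transpose i k) z"
proof -
  note ijk' = in_distinct_regionsD[OF ijk]
  have inv: "inv_set n u \<subseteq> inv_set n z" using z(3) by (simp add: weak_le_def)
  have "z k < z i"
  proof (rule ccontr)
    assume "\<not> z k < z i"
    then have "z i < z k" using inj_eq[OF permutes_inj[OF z(1)], of i k] ijk' by auto
    moreover have "(j, k) \<in> inv_set n u" using ijk' \<open>u k < u j\<close> unfolding inv_set_def by auto
    then have "z k < z j" using inv unfolding inv_set_def by auto
    moreover have "\<not> (z i < z p \<and> z p < z k)" if "i < p" "p < k" for p
    proof
      assume between: "z i < z p \<and> z p < z k"
      have "u p \<noteq> u i" "u p \<noteq> u k"
        using inj_eq[OF permutes_inj[OF u], of p] that by auto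
      then have "u p < u i \<or> u k < u p" using \<open>u k = u i + 1\<close> by arith
      then have "(i, p) \<in> inv_set n u \<or> (p, k) \<in> inv_set n u"
        using that ijk' unfolding inv_set_def by auto
      then have "(i, p) \<in> inv_set n z \<or> (p, k) \<in> inv_set n z" using inv by blast
      then show False using between unfolding inv_set_def by auto
    qed
    ultimately show False using not_avoids132I[OF z(1) ijk] z(2) by blast
  qed
  then have "(i, k) \<in> inv_set n z" using ijk' unfolding inv_set_def by auto
  then show ?thesis
    using inv inv_set_swap_ascent[OF u ijk'(1) _ ijk'(4)] ijk' \<open>u k = u i + 1\<close>
    by (auto simp: weak_le_def)
qed

lemma is_Pi_down_swap:
  assumes w: "w permutes {1..n}" and ijk: "in_distinct_regions n J i j k"
    and "w i < w j" "w i = w k + 1"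
    and x: "is_Pi_down n J (w \<circ> Transposition.transpose i k) x"
  shows "is_Pi_down n J w x"
proof -
  have "weak_le n (w \<circ> Transposition.transpose i k) w"
    using inv_set_swap_descent[OF w _ _ _ \<open>w i = w k + 1\<close>] in_distinct_regionsD[OF ijk]
    by (auto simp: weak_le_def)
  moreover have "weak_le n y (w \<circ> Transposition.transpose i k)"
    if "y \<in> parabolic n J" "avoids231 n J y" "weak_le n y w" for y
    using avoids231_below_le_swap[OF _ that(2,3) w ijk \<open>w i < w j\<close> \<open>w i = w k + 1\<close>] that(1)
    by (simp add: parabolic_def)
  ultimately show ?thesis using x unfolding is_Pi_down_def weak_le_def by blast
qed

lemma is_Pi_up_swap:
  assumes u: "u permutes {1..n}" and ijk: "in_distinct_regions n J i j k"
    and "u k < u j" "u k = u i + 1"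
  shows "is_Pi_up n J (u \<circ> Transposition.transpose i k) = is_Pi_up n J u"
proof -
  have "weak_le n u (u \<circ> Transposition.transpose i k)"
    using inv_set_swap_ascent[OF u _ _ _ \<open>u k = u i + 1\<close>] in_distinct_regionsD[OF ijk]
    by (auto simp: weak_le_def)
  moreover have "weak_le n (u \<circ> Transposition.transpose i k) z"
    if "z \<in> parabolic n J" "avoids132 n J z" "weak_le n u z" for z
    using avoids132_above_ge_swap[OF _ that(2,3) u ijk \<open>u k < u j\<close> \<open>u k = u i + 1\<close>] that(1)
    by (simp add: parabolic_def)
  ultimately have "weak_le n (u \<circ> Transposition.transpose i k) z \<longleftrightarrow> weak_le n u z"
    if "z \<in> parabolic n J" "avoids132 n J z" for z
    using that unfolding weak_le_def by blast
  then show ?thesis unfolding is_Pi_up_def by (intro ext) blast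
qed

lemma ex_is_Pi_down_same_is_Pi_up:
  "w \<in> parabolic n J \<Longrightarrow> \<exists>x. is_Pi_down n J w x \<and> is_Pi_up n J x = is_Pi_up n J w"
proof (induction "card (inv_set n w)" arbitrary: w rule: less_induct)
  case less
  have w: "w permutes {1..n}" using less.prems by (simp add: parabolic_def)
  show ?case
  proof (cases "avoids231 n J w")
    case True
    then have "is_Pi_down n J w w" using less.prems by (simp add: is_Pi_down_def weak_le_def)
    then show ?thesis by blast
  next
    case False
    then obtain i j k where ijk: "in_distinct_regions n J i j k"
      and pattern: "w k < w i" "w i < w j" "w i = w k + 1"
      unfolding avoids231_iff by blast
    note ijk' = in_distinct_regionsD[OF ijk]
    have "i < k" using ijk' by simp
    define u where "u = w \<circ> Transposition.transpose i k"
    have u: "u \<in> parabolic n J"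
      unfolding u_def using parabolic_swap[OF less.prems ijk'(1) \<open>i < k\<close> ijk'(4,5)] pattern by simp
    have "inv_set n w = insert (i, k) (inv_set n u)"
      using inv_set_swap_descent[OF w ijk'(1) \<open>i < k\<close> ijk'(4) pattern(3)] unfolding u_def .
    moreover have "(i, k) \<notin> inv_set n u" using pattern unfolding u_def inv_set_def by simp
    ultimately
    have "card (inv_set n u) < card (inv_set n w)" using inv_set_finite by simp
    then obtain x where x: "is_Pi_down n J u x" "is_Pi_up n J x = is_Pi_up n J u"
      using less.hyps[OF _ u] by blast
    have "is_Pi_down n J w x" using is_Pi_down_swap[OF w ijk pattern(2,3)] x(1) u_def by simp
    moreover have "is_Pi_up n J w = is_Pi_up n J u"
    proof -
      have "u permutes {1..n}" using u by (simp add: parabolic_def)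
      moreover have "u k < u j" "u k = u i + 1"
        using pattern ijk' unfolding u_def by auto
      moreover have "u \<circ> Transposition.transpose i k = w" unfolding u_def by (simp add: comp_assoc)
      ultimately show ?thesis using is_Pi_up_swap[of u n J i j k] ijk by simp
    qed
    ultimately show ?thesis using x(2) by auto
  qed
qed

lemma Pi_down_eq_The: "Pi_down n J w = (THE x. is_Pi_down n J w x)"
  by (simp add: Pi_down_def is_Pi_down_def)

lemma Pi_up_eq_The: "Pi_up n J w = (THE x. is_Pi_up n J w x)"
  by (simp add: Pi_up_def is_Pi_up_def)

lemma Pi_up_Pi_down:
  assumes "w \<in> parabolic n J"
  shows "Pi_up n J (Pi_down n J w) = Pi_up n J w"
proof -
  obtain x where x: "is_Pi_down n J w x" "is_Pi_up n J x = is_Pi_up n J w"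
    using ex_is_Pi_down_same_is_Pi_up[OF assms] by blast
  have "Pi_down n J w = x"
    unfolding Pi_down_eq_The using x(1) by (blast intro: the_equality is_Pi_down_unique)
  then show ?thesis using x(2) by (simp add: Pi_up_eq_The)
qed

theorem lemma3p17:
  fixes n :: nat and J :: "nat set" and u v :: "nat \<Rightarrow> nat"
  assumes "J \<subseteq> {1..<n}"
    and "u \<in> parabolic n J" and "v \<in> parabolic n J"
    and "Pi_down n J u = Pi_down n J v"
  shows "Pi_up n J u = Pi_up n J v"
proof -
  have "Pi_up n J u = Pi_up n J (Pi_down n J u)" using Pi_up_Pi_down[OF assms(2)] by simp
  also have "\<dots> = Pi_up n J (Pi_down n J v)" using assms(4) by simp
  also have "\<dots> = Pi_up n J v" using Pi_up_Pi_down[OF assms(3)] .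
  finally show ?thesis .
qed

end
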